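(* For every non-empty list $\Omega$ of atoms, the posets $\mathrm{Frm}_\Omega$ and $\mathrm{Ctx}_\Omega$ are lattices.
   Context: Formulas are built from atoms ($p,q,\dots$) by a binary product: every formula is an atom or $A\bullet B$. A context is a finite (possibly empty) list of formulas; commas denote concatenation. The frontier $\mathrm{fr}$ of a formula is its ordered list of atom occurrences: $\mathrm{fr}(p)=p$, $\mathrm{fr}(A\bullet B)=\mathrm{fr}(A),\mathrm{fr}(B)$; the frontier of a context is the concatenation of the frontiers of its formulas. The sequent calculus has exactly four rules (no weakening, contraction or exchange): ($\bullet L$) from $A,B,\Delta\vdash C$ infer $A\bullet B,\Delta\vdash C$ (the product must be leftmost); ($\bullet R$) from $\Gamma\vdash A$ and $\Delta\vdash B$ infer $\Gamma,\Delta\vdash A\bullet B$; ($id$) $A\vdash A$; ($cut$) from $\Theta\vdash A$ and $\Gamma,A,\Delta\vdash B$ infer $\Gamma,\Theta,\Delta\vdash B$; derivable means conclusion of a finite derivation tree with no undischarged premises. The Tamari order $\le$ on formulas is the least preorder with $(A\bullet B)\bullet C\le A\bullet(B\bullet C)$ and $A_1\le A_2$, $B_1\le B_2$ implying $A_1\bullet B_1\le A_2\bullet B_2$. The substitution order on contexts is the least relation $\le$ such that: (1) if $\Gamma\vdash A$ is derivable then $\Gamma\le A$ (the one-element context); (2) $\cdot\le\cdot$ for the empty context; (3) if $\Gamma_1\le\Gamma_2$ and $\Theta_1\le\Theta_2$ then $(\Gamma_1,\Theta_1)\le(\Gamma_2,\Theta_2)$. $\mathrm{Frm}_\Omega$ is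 the set of formulas with frontier $\Omega$ under the Tamari order, and $\mathrm{Ctx}_\Omega$ is the set of contexts with frontier $\Omega$ under the substitution order. *)

theory Defs
  imports Main "HOL-Algebra.Lattice"
begin

datatype 'a frm = Atom 'a | Prod "'a frm" "'a frm"

fun fr :: "'a frm \<Rightarrow> 'a list" where
  "fr (Atom p) = [p]"
| "fr (Prod A B) = fr A @ fr B"

definition frc :: "'a frm list \<Rightarrow> 'a list" where
  "frc \<Gamma> = concat (map fr \<Gamma>)"

inductive derivable :: "'a frm list \<Rightarrow> 'a frm \<Rightarrow> bool" where
  prodL: "derivable (A # B # \<Delta>) C \<Longrightarrow> derivable (Prod A B # \<Delta>) C"
| prodR: "derivable \<Gamma> A \<Longrightarrow> derivable \<Delta> B \<Longrightarrow> derivable (\<Gamma> @ \<Delta>) (Prod A B)"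
| ident: "derivable [A] A"
| cut: "derivable \<Theta> A \<Longrightarrow> derivable (\<Gamma> @ [A] @ \<Delta>) B \<Longrightarrow> derivable (\<Gamma> @ \<Theta> @ \<Delta>) B"

inductive tamari :: "'a frm \<Rightarrow> 'a frm \<Rightarrow> bool" where
  t_refl: "tamari A A"
| t_trans: "tamari A B \<Longrightarrow> tamari B C \<Longrightarrow> tamari A C"
| t_assoc: "tamari (Prod (Prod A B) C) (Prod A (Prod B C))"
| t_cong: "tamari A1 A2 \<Longrightarrow> tamari B1 B2 \<Longrightarrow> tamari (Prod A1 B1) (Prod A2 B2)"

inductive subst_le :: "'a frm list \<Rightarrow> 'a frm list \<Rightarrow> bool" where
  s_der: "derivable \<Gamma> A \<Longrightarrow> subst_le \<Gamma> [A]"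
| s_nil: "subst_le [] []"
| s_app: "subst_le \<Gamma>1 \<Gamma>2 \<Longrightarrow> subst_le \<Theta>1 \<Theta>2 \<Longrightarrow> subst_le (\<Gamma>1 @ \<Theta>1) (\<Gamma>2 @ \<Theta>2)"

definition Frm :: "'a list \<Rightarrow> 'a frm gorder" where
  "Frm \<Omega> = \<lparr>carrier = {A. fr A = \<Omega>}, eq = (=), le = tamari\<rparr>"

definition Ctx :: "'a list \<Rightarrow> 'a frm list gorder" where
  "Ctx \<Omega> = \<lparr>carrier = {\<Gamma>. frc \<Gamma> = \<Omega>}, eq = (=), le = subst_le\<rparr>"

end

theory Submission
  imports Defs
begin

text \<open>A formula is determined by its
  bracket vector, which records for every leaf \<open>t\<close> where the largest subformula starting at \<open>t\<close>
  ends, and the Tamari order is the pointwise order of bracket vectors: if the vector of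
  \<open>A\<^sub>1 \<bullet> A\<^sub>2\<close> lies below that of \<open>B\<^sub>1 \<bullet> B\<^sub>2\<close>, then either both split at the same leaf, or
  \<open>A\<^sub>1 \<le> B\<^sub>1 \<bullet> C\<close> and \<open>C \<bullet> A\<^sub>2 \<le> B\<^sub>2\<close> for the leftover part \<open>C\<close> of \<open>A\<^sub>1\<close>, and one associativity step
  connects the two. The pointwise minimum of two bracket vectors still satisfies the nesting
  condition that characterises bracket vectors, so it is the vector of a formula, the meet;
  joins follow by mirror symmetry.

  For contexts, the left comb \<open>(\<dots>((a \<bullet> \<Gamma>\<^sub>1) \<bullet> \<Gamma>\<^sub>2) \<dots>) \<bullet> \<Gamma>\<^sub>k\<close> turns the substitution order
  into the Tamari order, because derivability of \<open>\<Gamma> \<turnstile> C\<close> means that the left-associated product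
  of \<open>\<Gamma>\<close> is below \<open>C\<close>. This makes \<open>Ctx \<Omega>\<close> isomorphic to \<open>Frm (a # \<Omega>)\<close>.\<close>

section \<open>Frontiers and bracket vectors\<close>

lemma fr_not_Nil [simp]: "fr A \<noteq> []"
  by (induction A) auto

lemma length_fr_gt_0: "0 < length (fr A)"
  by simp

lemma fr_eq_singleton: "fr B = [a] \<Longrightarrow> B = Atom a"
  by (cases B) (auto simp: append_eq_Cons_conv)

lemma frc_simps [simp]:
  "frc [] = []" "frc (G # \<Gamma>) = fr G @ frc \<Gamma>" "frc (\<Gamma> @ \<Delta>) = frc \<Gamma> @ frc \<Delta>"
  by (simp_all add: frc_def)

lemma frc_eq_Nil_iff: "frc \<Gamma> = [] \<longleftrightarrow> \<Gamma> = []"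
  by (cases \<Gamma>) auto

text \<open>The bracket vector of a formula: with the leaves of \<open>T\<close> numbered \<open>d, d+1, \<dots>\<close>,
  \<open>reach T d t\<close> is the position just past the largest subformula of \<open>T\<close> whose leftmost
  leaf is \<open>t\<close>. Outside the leaves the value is fixed (\<open>Suc d\<close> before, \<open>d + |T|\<close> after),
  so that bracket vectors of formulas with the same frontier can be compared at every \<open>t\<close>.\<close>

fun reach :: "'a frm \<Rightarrow> nat \<Rightarrow> nat \<Rightarrow> nat" where
  "reach (Atom a) d t = Suc d"
| "reach (Prod L R) d t =
     (if t = d then d + length (fr L) + length (fr R)
      else if t < d + length (fr L) then reach L d t
      else reach R (d + length (fr L)) t)"

lemma reach_before: "t < d \<Longrightarrow> reach T d t = Suc d"
  by (induction T arbitrary: d) auto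

lemma reach_start: "reach T d d = d + length (fr T)"
  by (cases T) auto

lemma reach_after: "d + length (fr T) \<le> t \<Longrightarrow> reach T d t = d + length (fr T)"
proof (induction T arbitrary: d)
  case (Prod L R)
  then show ?case using length_fr_gt_0[of L] length_fr_gt_0[of R] by auto
qed auto

lemma reach_le_end: "reach T d t \<le> d + length (fr T)"
proof (induction T arbitrary: d)
  case (Prod L R)
  have "reach L d t \<le> d + length (fr L)"
    and "reach R (d + length (fr L)) t \<le> d + length (fr L) + length (fr R)"
    using Prod.IH(1)[of d] Prod.IH(2)[of "d + length (fr L)"] by auto
  then show ?case by auto
qed auto

lemma reach_gt: "d \<le> t \<Longrightarrow> t < d + length (fr T) \<Longrightarrow> t < reach T d t"
proof (induction T arbitrary: d)
  case (Prod L R)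
  then show ?case using length_fr_gt_0[of L] length_fr_gt_0[of R] by auto
qed auto

lemma reach_nested: "d \<le> s \<Longrightarrow> s < t \<Longrightarrow> t < reach T d s \<Longrightarrow> reach T d t \<le> reach T d s"
proof (induction T arbitrary: d)
  case (Prod L R)
  show ?case
  proof (cases "s = d")
    case True
    then show ?thesis
      using Prod reach_le_end[of L d t] reach_le_end[of R "d + length (fr L)" t] by auto
  next
    case False
    then show ?thesis using Prod reach_le_end[of L d s] by auto
  qed
qed auto

section \<open>The Tamari order is the pointwise order of bracket vectors\<close>

lemma tamari_fr_eq: "tamari A B \<Longrightarrow> fr A = fr B"
  by (induction rule: tamari.induct) auto

lemma tamari_reach_le: "tamari A B \<Longrightarrow> reach A d t \<le> reach B d t"
proof (induction arbitrary: d t rule: tamari.induct)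
  case (t_trans A B C)
  then show ?case using le_trans by blast
next
  case (t_assoc A B C)
  then show ?case using reach_le_end[of B "d + length (fr A)" t] by (auto simp: add.assoc)
next
  case (t_cong A1 A2 B1 B2)
  then show ?case using tamari_fr_eq[OF t_cong(1)] tamari_fr_eq[OF t_cong(2)] by auto
qed auto

fun drop_leaves :: "nat \<Rightarrow> 'a frm \<Rightarrow> 'a frm" where
  "drop_leaves k (Atom a) = Atom a"
| "drop_leaves k (Prod L R) =
     (if k = 0 then Prod L R
      else if length (fr L) \<le> k then drop_leaves (k - length (fr L)) R
      else Prod (drop_leaves k L) R)"

lemma fr_drop_leaves: "k < length (fr T) \<Longrightarrow> fr (drop_leaves k T) = drop k (fr T)"
  by (induction T arbitrary: k) auto

lemma reach_drop_leaves:
  "k < length (fr T) \<Longrightarrow> d + k \<le> t \<Longrightarrow>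
   reach (drop_leaves k T) (d + k) t = (if t = d + k then d + length (fr T) else reach T d t)"
proof (induction T arbitrary: k d)
  case (Prod L R)
  show ?case
  proof (cases "k = 0 \<or> length (fr L) \<le> k")
    case True
    have "k \<noteq> 0 \<Longrightarrow> reach (drop_leaves (k - length (fr L)) R) (d + k) t =
        (if t = d + k then d + length (fr (Prod L R)) else reach R (d + length (fr L)) t)"
      using Prod True Prod.IH(2)[of "k - length (fr L)" "d + length (fr L)"] by auto
    then show ?thesis using Prod True by auto
  next
    case False
    have "length (fr (drop_leaves k L)) = length (fr L) - k"
      using False fr_drop_leaves[of k L] by auto
    then show ?thesis using Prod False Prod.IH(1)[of k d] by auto
  qed
qed auto

lemma reach_le_Prod_length_left:
  assumes fr: "fr (Prod A1 A2) = fr (Prod B1 B2)"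
    and le: "\<forall>t. reach (Prod A1 A2) d t \<le> reach (Prod B1 B2) d t"
  shows "length (fr B1) \<le> length (fr A1)"
proof (rule ccontr)
  define m where "m = length (fr A1)"
  assume "\<not> length (fr B1) \<le> length (fr A1)"
  then have m: "m < length (fr B1)" by (simp add: m_def)
  have "d + m + length (fr A2) = reach (Prod A1 A2) d (d + m)"
    using length_fr_gt_0[of A1] by (simp add: m_def reach_start)
  also have "\<dots> \<le> reach B1 d (d + m)"
    using le[rule_format, of "d + m"] m length_fr_gt_0[of A1] by (simp add: m_def)
  also have "\<dots> \<le> d + length (fr B1)" by (rule reach_le_end)
  finally have "m + length (fr A2) \<le> length (fr B1)" by simp
  moreover have "m + length (fr A2) = length (fr B1) + length (fr B2)"
    using arg_cong[OF fr, of length] by (simp add: m_def)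
  ultimately show False using length_fr_gt_0[of B2] by simp
qed

lemma reach_le_Prod_same_split:
  assumes fr: "fr (Prod A1 A2) = fr (Prod B1 B2)"
    and le: "\<forall>t. reach (Prod A1 A2) d t \<le> reach (Prod B1 B2) d t"
    and len: "length (fr A1) = length (fr B1)"
  shows "fr A1 = fr B1" "fr A2 = fr B2"
    and "\<forall>t. reach A1 d t \<le> reach B1 d t"
    and "\<forall>t. reach A2 (d + length (fr A1)) t \<le> reach B2 (d + length (fr A1)) t"
proof -
  define m where "m = length (fr A1)"
  show frs: "fr A1 = fr B1" "fr A2 = fr B2"
    using fr len by (auto simp: append_eq_append_conv)
  show "\<forall>t. reach A1 d t \<le> reach B1 d t"
  proof
    fix t
    consider "t < d" | "t = d" | "d + m \<le> t" | "d < t \<and> t < d + m" by linarith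
    then show "reach A1 d t \<le> reach B1 d t"
    proof cases
      case 4
      then show ?thesis using le[rule_format, of t] len by (simp add: m_def)
    qed (use frs in \<open>simp_all add: m_def reach_before reach_start reach_after\<close>)
  qed
  show "\<forall>t. reach A2 (d + m) t \<le> reach B2 (d + m) t" unfolding m_def
  proof
    fix t
    consider "t \<le> d + length (fr A1)" | "d + length (fr A1) < t" by linarith
    then show "reach A2 (d + length (fr A1)) t \<le> reach B2 (d + length (fr A1)) t"
    proof cases
      case 1
      then show ?thesis
        using frs by (cases "t = d + length (fr A1)") (simp_all add: reach_before reach_start)
    next
      case 2
      then show ?thesis using le[rule_format, of t] len length_fr_gt_0[of A1] by auto
    qed
  qed
qed

lemma reach_le_Prod_rotate:
  assumes fr: "fr (Prod A1 A2) = fr (Prod B1 B2)"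
    and le: "\<forall>t. reach (Prod A1 A2) d t \<le> reach (Prod B1 B2) d t"
    and len: "length (fr B1) < length (fr A1)"
  obtains C where "fr A1 = fr (Prod B1 C)" "fr (Prod C A2) = fr B2"
    and "\<forall>t. reach A1 d t \<le> reach (Prod B1 C) d t"
    and "\<forall>t. reach (Prod C A2) (d + length (fr B1)) t \<le> reach B2 (d + length (fr B1)) t"
proof
  define k where "k = length (fr B1)"
  define m where "m = length (fr A1)"
  define C where "C = drop_leaves k A1"
  have km: "0 < k" "k < m" using len length_fr_gt_0[of B1] by (simp_all add: k_def m_def)
  have frC: "fr C = drop k (fr A1)"
    using fr_drop_leaves km by (simp add: C_def m_def)
  have take_k: "take k (fr A1) = fr B1"
    using arg_cong[OF fr, of "take k"] km by (simp add: k_def m_def)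
  show frA1: "fr A1 = fr (Prod B1 C)"
    using take_k frC by (metis append_take_drop_id fr.simps(2))
  show frB2: "fr (Prod C A2) = fr B2"
    using arg_cong[OF fr, of "drop k"] km frC by (simp add: k_def m_def)
  have reach_C: "\<And>t. d + k \<le> t \<Longrightarrow> reach C (d + k) t = (if t = d + k then d + m else reach A1 d t)"
    using reach_drop_leaves[of k A1 d] km by (simp add: C_def m_def)
  have lenC: "length (fr C) = m - k" using frC by (simp add: m_def)
  show "\<forall>t. reach A1 d t \<le> reach (Prod B1 C) d t"
  proof
    fix t
    consider "t < d" | "t = d" | "d < t \<and> t < d + k" | "d + k \<le> t" by linarith
    then show "reach A1 d t \<le> reach (Prod B1 C) d t"
    proof cases
      case 3
      then show ?thesis using le[rule_format, of t] km by (simp add: k_def m_def)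
    next
      case 4
      then show ?thesis using reach_C[of t] reach_le_end[of A1 d] km by (simp add: k_def m_def)
    qed (use frA1 in \<open>simp_all add: reach_before reach_start\<close>)
  qed
  show "\<forall>t. reach (Prod C A2) (d + k) t \<le> reach B2 (d + k) t" unfolding k_def
  proof
    fix t
    consider "t < d + k" | "t = d + k" | "d + k < t \<and> t < d + m" | "d + m \<le> t" by linarith
    then show "reach (Prod C A2) (d + length (fr B1)) t \<le> reach B2 (d + length (fr B1)) t"
    proof cases
      case 3
      then show ?thesis using le[rule_format, of t] reach_C[of t] lenC km by (simp add: k_def m_def)
    next
      case 4
      then show ?thesis using le[rule_format, of t] lenC km by (simp add: k_def m_def)
    qed (use frB2 in \<open>simp_all add: k_def reach_before reach_start\<close>)
  qed
qed

lemma reach_le_imp_tamari: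
  "fr A = fr B \<Longrightarrow> \<forall>t. reach A d t \<le> reach B d t \<Longrightarrow> tamari A B"
proof (induction "length (fr A)" arbitrary: A B d rule: less_induct)
  case less
  show ?case
  proof (cases A)
    case (Atom a)
    then show ?thesis using less.prems fr_eq_singleton[of B a] by (simp add: t_refl)
  next
    case (Prod A1 A2)
    obtain B1 B2 where B: "B = Prod B1 B2"
      using less.prems Prod by (cases B) (auto simp: append_eq_Cons_conv)
    have fr: "fr (Prod A1 A2) = fr (Prod B1 B2)"
      and le: "\<forall>t. reach (Prod A1 A2) d t \<le> reach (Prod B1 B2) d t"
      using less.prems Prod B by simp_all
    have shorter: "length (fr A1) < length (fr A)" "length (fr A2) < length (fr A)"
      using Prod length_fr_gt_0[of A1] length_fr_gt_0[of A2] by simp_all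
    consider "length (fr A1) = length (fr B1)" | "length (fr B1) < length (fr A1)"
      using reach_le_Prod_length_left[OF fr le] by linarith
    then show ?thesis
    proof cases
      case 1
      note split = reach_le_Prod_same_split[OF fr le 1]
      have "tamari A1 B1" using less.hyps[OF shorter(1) split(1,3)] .
      moreover have "tamari A2 B2" using less.hyps[OF shorter(2) split(2,4)] .
      ultimately show ?thesis using Prod B by (simp add: t_cong)
    next
      case 2
      obtain C where C: "fr A1 = fr (Prod B1 C)" "fr (Prod C A2) = fr B2"
        "\<forall>t. reach A1 d t \<le> reach (Prod B1 C) d t"
        "\<forall>t. reach (Prod C A2) (d + length (fr B1)) t \<le> reach B2 (d + length (fr B1)) t"
        using reach_le_Prod_rotate[OF fr le 2] by blast
      have "length (fr (Prod C A2)) < length (fr A)"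
        using C(2) less.prems(1) B length_fr_gt_0[of B1] by simp
      then have "tamari A1 (Prod B1 C)" "tamari (Prod C A2) B2"
        using less.hyps[OF shorter(1) C(1,3)] less.hyps[OF _ C(2,4)] by simp_all
      then have "tamari (Prod A1 A2) (Prod (Prod B1 C) A2)"
        and "tamari (Prod B1 (Prod C A2)) (Prod B1 B2)"
        by (simp_all add: t_cong t_refl)
      then show ?thesis using Prod B t_assoc t_trans by metis
    qed
  qed
qed

lemma tamari_iff_reach_le: "tamari A B \<longleftrightarrow> fr A = fr B \<and> (\<forall>t. reach A d t \<le> reach B d t)"
  using reach_le_imp_tamari tamari_fr_eq tamari_reach_le by metis

lemma tamari_Prod_Prod_cases:
  assumes "tamari (Prod A1 A2) (Prod B1 B2)"
  obtains "tamari A1 B1" "tamari A2 B2"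
    | C where "tamari A1 (Prod B1 C)" "tamari (Prod C A2) B2"
proof -
  have fr: "fr (Prod A1 A2) = fr (Prod B1 B2)"
    and le: "\<forall>t. reach (Prod A1 A2) 0 t \<le> reach (Prod B1 B2) 0 t"
    using assms tamari_iff_reach_le by blast+
  consider "length (fr A1) = length (fr B1)" | "length (fr B1) < length (fr A1)"
    using reach_le_Prod_length_left[OF fr le] by linarith
  then show thesis
  proof cases
    case 1
    then show thesis
      using that reach_le_Prod_same_split[OF fr le 1] reach_le_imp_tamari by blast
  next
    case 2
    then show thesis
      using that reach_le_Prod_rotate[OF fr le 2] reach_le_imp_tamari by metis
  qed
qed

lemma reach_le_antisym:
  "fr A = fr B \<Longrightarrow> \<forall>t. reach A d t \<le> reach B d t \<Longrightarrow> \<forall>t. reach B d t \<le> reach A d t \<Longrightarrow> A = B"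
proof (induction A arbitrary: B d)
  case (Atom a)
  then show ?case using fr_eq_singleton[of B a] by simp
next
  case (Prod A1 A2)
  obtain B1 B2 where B: "B = Prod B1 B2"
    using Prod.prems by (cases B) (auto simp: append_eq_Cons_conv)
  have fr: "fr (Prod A1 A2) = fr (Prod B1 B2)" "fr (Prod B1 B2) = fr (Prod A1 A2)"
    and le: "\<forall>t. reach (Prod A1 A2) d t \<le> reach (Prod B1 B2) d t"
      "\<forall>t. reach (Prod B1 B2) d t \<le> reach (Prod A1 A2) d t"
    using Prod.prems B by simp_all
  have len: "length (fr A1) = length (fr B1)"
    using reach_le_Prod_length_left[OF fr(1) le(1)] reach_le_Prod_length_left[OF fr(2) le(2)]
    by simp
  note AB = reach_le_Prod_same_split[OF fr(1) le(1) len]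
  note BA = reach_le_Prod_same_split[OF fr(2) le(2) len[symmetric]]
  have "A1 = B1" using Prod.IH(1) AB(1,3) BA(3) by blast
  moreover have "A2 = B2" using Prod.IH(2) AB(2,4) BA(4) len by simp
  ultimately show ?case using B by simp
qed

lemma tamari_antisym: "tamari A B \<Longrightarrow> tamari B A \<Longrightarrow> A = B"
  using reach_le_antisym tamari_iff_reach_le by metis

section \<open>Meets and joins of formulas\<close>

definition nested :: "(nat \<Rightarrow> nat) \<Rightarrow> nat \<Rightarrow> bool" where
  "nested R n \<longleftrightarrow> (\<forall>t<n. t < R t) \<and> (\<forall>s t. s < t \<and> t < R s \<longrightarrow> R t \<le> R s)"

lemma nested_reach: "nested (reach A 0) (length (fr A))"
  unfolding nested_def using reach_gt[of 0 _ A] reach_nested[of 0 _ _ A] by auto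

lemma nested_min: "nested R n \<Longrightarrow> nested S n \<Longrightarrow> nested (\<lambda>t. min (R t) (S t)) n"
  unfolding nested_def by (metis min.mono min_less_iff_conj nat_less_le)

text \<open>The formula on the leaves \<open>[i, j)\<close> splits before the first leaf after \<open>i\<close> whose
  subformula reaches \<open>j\<close>. The disjunct \<open>Suc t = j\<close> only makes \<open>LEAST\<close> well-defined for
  arbitrary \<open>R\<close>.\<close>

definition split_point :: "(nat \<Rightarrow> nat) \<Rightarrow> nat \<Rightarrow> nat \<Rightarrow> nat" where
  "split_point R i j = (LEAST t. i < t \<and> (j \<le> R t \<or> Suc t = j))"

lemma split_point:
  assumes "Suc i < j"
  shows "i < split_point R i j" "split_point R i j < j"
    and "j \<le> R (split_point R i j) \<or> Suc (split_point R i j) = j"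
    and "\<And>t. i < t \<Longrightarrow> t < split_point R i j \<Longrightarrow> R t < j"
proof -
  have witness: "i < j - 1 \<and> (j \<le> R (j - 1) \<or> Suc (j - 1) = j)" using assms by auto
  have "i < split_point R i j \<and> (j \<le> R (split_point R i j) \<or> Suc (split_point R i j) = j)"
    unfolding split_point_def by (rule LeastI[of _ "j - 1"]) (rule witness)
  moreover have "split_point R i j \<le> j - 1"
    unfolding split_point_def by (rule Least_le) (rule witness)
  ultimately show "i < split_point R i j" "split_point R i j < j"
    and "j \<le> R (split_point R i j) \<or> Suc (split_point R i j) = j"
    using assms by auto
  fix t assume "i < t" "t < split_point R i j"
  then show "R t < j"
    using not_less_Least[of t "\<lambda>t. i < t \<and> (j \<le> R t \<or> Suc t = j)"]
    unfolding split_point_def by auto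
qed

function frm_of_reach :: "(nat \<Rightarrow> nat) \<Rightarrow> 'a list \<Rightarrow> nat \<Rightarrow> nat \<Rightarrow> 'a frm" where
  "frm_of_reach R w i j =
     (if j \<le> Suc i then Atom (w ! i)
      else Prod (frm_of_reach R w i (split_point R i j)) (frm_of_reach R w (split_point R i j) j))"
  by pat_completeness auto
termination
proof (relation "measure (\<lambda>(R, w, i, j). j - i)")
  fix R :: "nat \<Rightarrow> nat" and w :: "'a list" and i j
  assume "\<not> j \<le> Suc i"
  then have "Suc i < j" by simp
  then show "((R, w, i, split_point R i j), R, w, i, j) \<in> measure (\<lambda>(R, w, i, j). j - i)"
    and "((R, w, split_point R i j, j), R, w, i, j) \<in> measure (\<lambda>(R, w, i, j). j - i)"
    using split_point(1,2)[of i j R] by auto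
qed simp

declare frm_of_reach.simps [simp del]

lemma split_point_nested:
  assumes nested: "nested R n" and "j \<le> n" "Suc i < j"
    and inside: "\<And>t. i < t \<Longrightarrow> t < j \<Longrightarrow> R t \<le> j"
  shows "R (split_point R i j) = j"
    and "\<And>t. i < t \<Longrightarrow> t < split_point R i j \<Longrightarrow> R t \<le> split_point R i j"
proof -
  define s where "s = split_point R i j"
  note s = split_point[OF \<open>Suc i < j\<close>, where R = R, folded s_def]
  have "s < R s" using nested s(2) \<open>j \<le> n\<close> unfolding nested_def by simp
  then have "j \<le> R s" using s(3) by auto
  then show Rs: "R s = j" using inside s(1,2) by (simp add: antisym)
  fix t assume t: "i < t" "t < s"
  show "R t \<le> s"
  proof (rule ccontr)
    assume "\<not> R t \<le> s"
    then have "R s \<le> R t" using nested t unfolding nested_def by auto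
    then show False using Rs s(4)[OF t] by simp
  qed
qed

lemma frm_of_reach_correct:
  "nested R (length w) \<Longrightarrow> j \<le> length w \<Longrightarrow> i < j \<Longrightarrow> j \<le> R i \<Longrightarrow>
   (\<forall>t. i < t \<and> t < j \<longrightarrow> R t \<le> j) \<Longrightarrow>
   fr (frm_of_reach R w i j) = take (j - i) (drop i w) \<and>
   (\<forall>t. i \<le> t \<and> t < j \<longrightarrow> reach (frm_of_reach R w i j) i t = (if t = i then j else R t))"
proof (induction R w i j rule: frm_of_reach.induct)
  case (1 R w i j)
  show ?case
  proof (cases "j \<le> Suc i")
    case True
    then have "j = Suc i" using 1 by simp
    moreover have "take 1 (drop i w) = [w ! i]"
      using 1 \<open>j = Suc i\<close> by (simp add: Cons_nth_drop_Suc[symmetric])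
    ultimately show ?thesis by (simp add: frm_of_reach.simps)
  next
    case False
    define s where "s = split_point R i j"
    note s = split_point[where i = i and j = j and R = R, folded s_def]
    note sn = split_point_nested[OF 1(3,4), where i = i, folded s_def]
    have s_bounds: "i < s" "s < j" "s \<le> length w" "s \<le> R i" "R s = j"
      using s sn False 1 by auto
    have left_inside: "\<forall>t. i < t \<and> t < s \<longrightarrow> R t \<le> s"
      using sn(2) False 1(7) by auto
    have IH1: "fr (frm_of_reach R w i s) = take (s - i) (drop i w) \<and>
      (\<forall>t. i \<le> t \<and> t < s \<longrightarrow> reach (frm_of_reach R w i s) i t = (if t = i then s else R t))"
      using 1(1)[OF False 1(3), folded s_def] s_bounds left_inside by blast
    have IH2: "fr (frm_of_reach R w s j) = take (j - s) (drop s w) \<and>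
      (\<forall>t. s \<le> t \<and> t < j \<longrightarrow> reach (frm_of_reach R w s j) s t = (if t = s then j else R t))"
      using 1(2)[OF False 1(3,4), folded s_def] s_bounds 1(7) by simp
    have split: "frm_of_reach R w i j = Prod (frm_of_reach R w i s) (frm_of_reach R w s j)"
      using False by (simp add: frm_of_reach.simps s_def)
    have lengths: "length (fr (frm_of_reach R w i s)) = s - i"
      "length (fr (frm_of_reach R w s j)) = j - s"
      using IH1 IH2 s_bounds 1(4) by simp_all
    have "take (j - i) (drop i w) = take (s - i) (drop i w) @ take (j - s) (drop s w)"
      using s_bounds take_add[of "s - i" "j - s" "drop i w"] by simp
    then show ?thesis using IH1 IH2 split lengths s_bounds by auto
  qed
qed

definition tamari_meet :: "'a frm \<Rightarrow> 'a frm \<Rightarrow> 'a frm" where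
  "tamari_meet A B = frm_of_reach (\<lambda>t. min (reach A 0 t) (reach B 0 t)) (fr A) 0 (length (fr A))"

lemma fr_tamari_meet_and_reach:
  assumes "fr A = fr B"
  shows "fr (tamari_meet A B) = fr A"
    and "reach (tamari_meet A B) 0 t = min (reach A 0 t) (reach B 0 t)"
proof -
  define n where "n = length (fr A)"
  define R where "R = (\<lambda>t. min (reach A 0 t) (reach B 0 t))"
  have "nested R n" unfolding R_def n_def using nested_min nested_reach assms by metis
  moreover have "0 < n" "n \<le> R 0" using assms by (simp_all add: n_def R_def reach_start)
  moreover have "\<forall>t. 0 < t \<and> t < n \<longrightarrow> R t \<le> n"
    using reach_le_end[of A 0] by (simp add: R_def n_def min.coboundedI1)
  ultimately have "fr (tamari_meet A B) = take n (fr A) \<and>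
      (\<forall>t. t < n \<longrightarrow> reach (tamari_meet A B) 0 t = (if t = 0 then n else R t))"
    using frm_of_reach_correct[of R "fr A" n 0] unfolding tamari_meet_def R_def n_def by simp
  then have correct: "fr (tamari_meet A B) = fr A"
      "\<And>t. t < n \<Longrightarrow> reach (tamari_meet A B) 0 t = (if t = 0 then n else R t)"
    by (simp_all add: n_def)
  then show "fr (tamari_meet A B) = fr A" by simp
  show "reach (tamari_meet A B) 0 t = R t"
  proof (cases "t < n")
    case True
    then show ?thesis using correct assms by (simp add: R_def n_def reach_start)
  next
    case False
    then show ?thesis
      using correct(1) assms reach_after[of 0 "tamari_meet A B" t] reach_after[of 0 A t]
        reach_after[of 0 B t]
      by (simp add: R_def n_def)
  qed
qed

lemma tamari_meet_iff:
  assumes "fr A = fr B"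
  shows "tamari X (tamari_meet A B) \<longleftrightarrow> tamari X A \<and> tamari X B"
proof -
  note meet = fr_tamari_meet_and_reach[OF assms]
  have "tamari X (tamari_meet A B) \<longleftrightarrow>
      fr X = fr A \<and> (\<forall>t. reach X 0 t \<le> min (reach A 0 t) (reach B 0 t))"
    unfolding tamari_iff_reach_le[where d = 0] using meet by simp
  also have "\<dots> \<longleftrightarrow> tamari X A \<and> tamari X B"
    using assms tamari_iff_reach_le[where d = 0] by auto
  finally show ?thesis .
qed

fun mirror :: "'a frm \<Rightarrow> 'a frm" where
  "mirror (Atom a) = Atom a"
| "mirror (Prod A B) = Prod (mirror B) (mirror A)"

lemma fr_mirror [simp]: "fr (mirror A) = rev (fr A)"
  by (induction A) auto

lemma mirror_mirror [simp]: "mirror (mirror A) = A"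
  by (induction A) auto

lemma tamari_mirror: "tamari A B \<Longrightarrow> tamari (mirror B) (mirror A)"
proof (induction rule: tamari.induct)
  case (t_trans A B C)
  then show ?case using tamari.t_trans by blast
qed (auto intro: tamari.intros)

lemma tamari_mirror_iff [simp]: "tamari (mirror A) (mirror B) \<longleftrightarrow> tamari B A"
  using tamari_mirror[of "mirror A" "mirror B"] tamari_mirror[of B A] by auto

definition tamari_join :: "'a frm \<Rightarrow> 'a frm \<Rightarrow> 'a frm" where
  "tamari_join A B = mirror (tamari_meet (mirror A) (mirror B))"

lemma fr_tamari_join: "fr A = fr B \<Longrightarrow> fr (tamari_join A B) = fr A"
  using fr_tamari_meet_and_reach(1)[of "mirror A" "mirror B"] by (simp add: tamari_join_def)

lemma tamari_join_iff:
  assumes "fr A = fr B"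
  shows "tamari (tamari_join A B) X \<longleftrightarrow> tamari A X \<and> tamari B X"
proof -
  have "tamari (tamari_join A B) X \<longleftrightarrow> tamari (mirror X) (tamari_meet (mirror A) (mirror B))"
    using tamari_mirror_iff[of "tamari_meet (mirror A) (mirror B)" "mirror X"]
    by (simp add: tamari_join_def)
  also have "\<dots> \<longleftrightarrow> tamari A X \<and> tamari B X"
    using tamari_meet_iff[of "mirror A" "mirror B" "mirror X"] assms by simp
  finally show ?thesis .
qed

section \<open>Derivability and the substitution order\<close>

lemma fr_foldl_Prod: "fr (foldl Prod S \<Gamma>) = fr S @ frc \<Gamma>"
  by (induction \<Gamma> arbitrary: S) auto

lemma tamari_foldl_Prod_mono: "tamari S S' \<Longrightarrow> tamari (foldl Prod S \<Gamma>) (foldl Prod S' \<Gamma>)"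
  by (induction \<Gamma> arbitrary: S S') (auto intro: t_cong t_refl)

lemma tamari_foldl_Prod_assoc: "tamari (foldl Prod S (D # \<Delta>)) (Prod S (foldl Prod D \<Delta>))"
proof (induction \<Delta> rule: rev_induct)
  case Nil
  then show ?case by (simp add: t_refl)
next
  case (snoc E \<Delta>)
  have "tamari (Prod (foldl Prod S (D # \<Delta>)) E) (Prod (Prod S (foldl Prod D \<Delta>)) E)"
    using snoc t_cong t_refl by blast
  then show ?case using t_assoc t_trans by simp blast
qed

text \<open>Unspecified for the empty context, since \<open>hd []\<close> is.\<close>

definition left_product :: "'a frm list \<Rightarrow> 'a frm" where
  "left_product \<Gamma> = foldl Prod (hd \<Gamma>) (tl \<Gamma>)"

lemma derivable_not_Nil: "derivable \<Gamma> C \<Longrightarrow> \<Gamma> \<noteq> []"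
  by (induction rule: derivable.induct) auto

lemma derivable_imp_tamari: "derivable \<Gamma> C \<Longrightarrow> tamari (left_product \<Gamma>) C"
proof (induction rule: derivable.induct)
  case (prodL A B \<Delta> C)
  then show ?case by (simp add: left_product_def)
next
  case (prodR \<Gamma> A \<Delta> B)
  obtain D \<Delta>' where D: "\<Delta> = D # \<Delta>'" using derivable_not_Nil[OF prodR(2)] by (cases \<Delta>) auto
  have "left_product (\<Gamma> @ \<Delta>) = foldl Prod (left_product \<Gamma>) (D # \<Delta>')"
    using derivable_not_Nil[OF prodR(1)] D by (cases \<Gamma>) (simp_all add: left_product_def)
  moreover have "tamari (foldl Prod (left_product \<Gamma>) (D # \<Delta>')) (Prod (left_product \<Gamma>) (left_product \<Delta>))"
    using tamari_foldl_Prod_assoc D by (simp add: left_product_def)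
  moreover have "tamari (Prod (left_product \<Gamma>) (left_product \<Delta>)) (Prod A B)"
    using prodR t_cong by blast
  ultimately show ?case using t_trans by metis
next
  case (ident A)
  then show ?case by (simp add: left_product_def t_refl)
next
  case (cut \<Theta> A \<Gamma> \<Delta> B)
  obtain T \<Theta>' where T: "\<Theta> = T # \<Theta>'" using derivable_not_Nil[OF cut(1)] by (cases \<Theta>) auto
  have "tamari (left_product (\<Gamma> @ \<Theta> @ \<Delta>)) (left_product (\<Gamma> @ [A] @ \<Delta>))"
  proof (cases \<Gamma>)
    case Nil
    then show ?thesis
      using T tamari_foldl_Prod_mono[OF cut(3), of \<Delta>] by (simp add: left_product_def)
  next
    case (Cons G \<Gamma>')
    have "tamari (foldl Prod (foldl Prod G \<Gamma>') (T # \<Theta>')) (Prod (foldl Prod G \<Gamma>') A)"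
      using tamari_foldl_Prod_assoc[of "foldl Prod G \<Gamma>'" T \<Theta>'] cut(3) T t_cong t_refl t_trans
      by (metis left_product_def list.sel(1) list.sel(3))
    then show ?thesis
      using Cons T tamari_foldl_Prod_mono by (simp add: left_product_def)
  qed
  then show ?case using cut(4) t_trans by blast
qed

lemma derivable_cut_single: "derivable \<Theta> A \<Longrightarrow> derivable [A] B \<Longrightarrow> derivable \<Theta> B"
  using derivable.cut[of \<Theta> A "[]" "[]" B] by simp

lemma tamari_imp_derivable_single: "tamari A B \<Longrightarrow> derivable [A] B"
proof (induction rule: tamari.induct)
  case (t_refl A)
  then show ?case by (rule ident)
next
  case (t_trans A B C)
  then show ?case using derivable_cut_single by blast
next
  case (t_assoc A B C)
  have "derivable ([A] @ [B] @ [C]) (Prod A (Prod B C))"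
    by (intro prodR ident)
  then have "derivable [Prod A B, C] (Prod A (Prod B C))" using prodL by simp
  then show ?case using prodL[of "Prod A B" C "[]"] by simp
next
  case (t_cong A1 A2 B1 B2)
  have "derivable ([A1] @ [B1]) (Prod A2 B2)" using prodR t_cong by blast
  then show ?case using prodL[of A1 B1 "[]"] by simp
qed

lemma derivable_left_product: "\<Gamma> \<noteq> [] \<Longrightarrow> derivable \<Gamma> (left_product \<Gamma>)"
proof (induction \<Gamma> rule: rev_induct)
  case (snoc x \<Gamma>)
  show ?case
  proof (cases "\<Gamma> = []")
    case True
    then show ?thesis by (simp add: left_product_def ident)
  next
    case False
    have "left_product (\<Gamma> @ [x]) = Prod (left_product \<Gamma>) x"
      using False by (cases \<Gamma>) (auto simp: left_product_def)
    then show ?thesis using prodR[OF snoc(1)[OF False] ident] by simp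
  qed
qed simp

lemma derivable_iff_tamari: "derivable \<Gamma> C \<longleftrightarrow> \<Gamma> \<noteq> [] \<and> tamari (left_product \<Gamma>) C"
proof
  assume "derivable \<Gamma> C"
  then show "\<Gamma> \<noteq> [] \<and> tamari (left_product \<Gamma>) C"
    using derivable_not_Nil derivable_imp_tamari by blast
next
  assume "\<Gamma> \<noteq> [] \<and> tamari (left_product \<Gamma>) C"
  then show "derivable \<Gamma> C"
    using derivable_cut_single[OF derivable_left_product tamari_imp_derivable_single] by blast
qed

abbreviation comb :: "'a \<Rightarrow> 'a frm list \<Rightarrow> 'a frm" where
  "comb a \<Gamma> \<equiv> foldl Prod (Atom a) \<Gamma>"

lemma subst_le_imp_tamari: "subst_le \<Gamma> \<Delta> \<Longrightarrow> tamari (foldl Prod S \<Gamma>) (foldl Prod S \<Delta>)"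
proof (induction arbitrary: S rule: subst_le.induct)
  case (s_der \<Gamma> A)
  obtain G \<Gamma>' where G: "\<Gamma> = G # \<Gamma>'" using derivable_not_Nil[OF s_der] by (cases \<Gamma>) auto
  have "tamari (foldl Prod S \<Gamma>) (Prod S (left_product \<Gamma>))"
    using tamari_foldl_Prod_assoc G by (simp add: left_product_def)
  moreover have "tamari (Prod S (left_product \<Gamma>)) (Prod S A)"
    using derivable_imp_tamari[OF s_der] t_cong t_refl by blast
  ultimately show ?case using t_trans by simp blast
next
  case s_nil
  then show ?case by (simp add: t_refl)
next
  case (s_app \<Gamma>1 \<Gamma>2 \<Theta>1 \<Theta>2)
  have "tamari (foldl Prod (foldl Prod S \<Gamma>1) \<Theta>1) (foldl Prod (foldl Prod S \<Gamma>1) \<Theta>2)"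
    using s_app by blast
  moreover have "tamari (foldl Prod (foldl Prod S \<Gamma>1) \<Theta>2) (foldl Prod (foldl Prod S \<Gamma>2) \<Theta>2)"
    using tamari_foldl_Prod_mono s_app by blast
  ultimately show ?case using t_trans by simp blast
qed

lemma subst_le_iff_blocks: "subst_le \<Gamma> \<Delta> \<longleftrightarrow> (\<exists>Gs. \<Gamma> = concat Gs \<and> list_all2 derivable Gs \<Delta>)"
proof
  assume "subst_le \<Gamma> \<Delta>"
  then show "\<exists>Gs. \<Gamma> = concat Gs \<and> list_all2 derivable Gs \<Delta>"
  proof (induction rule: subst_le.induct)
    case (s_der \<Gamma> A)
    then show ?case by (intro exI[of _ "[\<Gamma>]"]) auto
  next
    case (s_app \<Gamma>1 \<Gamma>2 \<Theta>1 \<Theta>2)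
    then obtain G1 G2 where "\<Gamma>1 = concat G1" "list_all2 derivable G1 \<Gamma>2"
      "\<Theta>1 = concat G2" "list_all2 derivable G2 \<Theta>2"
      by blast
    then show ?case by (intro exI[of _ "G1 @ G2"]) (auto intro: list_all2_appendI)
  qed simp
next
  assume "\<exists>Gs. \<Gamma> = concat Gs \<and> list_all2 derivable Gs \<Delta>"
  then obtain Gs where "\<Gamma> = concat Gs" "list_all2 derivable Gs \<Delta>" by blast
  moreover have "list_all2 derivable Gs \<Delta> \<Longrightarrow> subst_le (concat Gs) \<Delta>"
  proof (induction rule: list_all2_induct)
    case (Cons G Gs D \<Delta>)
    then show ?case using s_app[OF s_der[OF Cons(1)] Cons(3)] by simp
  qed (simp add: s_nil)
  ultimately show "subst_le \<Gamma> \<Delta>" by blast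
qed

lemma subst_le_snocE:
  assumes "subst_le \<Gamma> (\<Delta> @ [C])"
  obtains \<Gamma>1 \<Gamma>2 where "\<Gamma> = \<Gamma>1 @ \<Gamma>2" "subst_le \<Gamma>1 \<Delta>" "derivable \<Gamma>2 C"
proof -
  obtain Gs where Gs: "\<Gamma> = concat Gs" "list_all2 derivable Gs (\<Delta> @ [C])"
    using assms subst_le_iff_blocks by blast
  then obtain us v where "Gs = us @ [v]" "list_all2 derivable us \<Delta>" "derivable v C"
    by (auto simp: list_all2_append2 list_all2_Cons2)
  moreover have "subst_le (concat us) \<Delta>" using subst_le_iff_blocks \<open>list_all2 derivable us \<Delta>\<close> by blast
  ultimately show thesis using that Gs by simp
qed

lemma tamari_comb_imp_subst_le: "tamari (comb a \<Gamma>) (comb a \<Delta>) \<Longrightarrow> subst_le \<Gamma> \<Delta>"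
proof (induction \<Gamma> arbitrary: \<Delta> rule: rev_induct)
  case Nil
  have "[a] = a # frc \<Delta>" using tamari_fr_eq[OF Nil] fr_foldl_Prod[of "Atom a" \<Delta>] by simp
  then have "\<Delta> = []" using frc_eq_Nil_iff by (metis list.inject)
  then show ?case by (simp add: s_nil)
next
  case (snoc G \<Gamma>)
  show ?case
  proof (cases \<Delta> rule: rev_cases)
    case Nil
    then have "a # frc \<Gamma> @ fr G = [a]"
      using tamari_fr_eq[OF snoc.prems] fr_foldl_Prod[of "Atom a" "\<Gamma> @ [G]"] by simp
    then show ?thesis by simp
  next
    case (snoc \<Delta> D)
    then have "tamari (Prod (comb a \<Gamma>) G) (Prod (comb a \<Delta>) D)"
      using snoc.prems by simp
    then show ?thesis
    proof (cases rule: tamari_Prod_Prod_cases)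
      case 1
      then have "subst_le (\<Gamma> @ [G]) (\<Delta> @ [D])"
        using s_app[OF snoc.IH s_der[OF tamari_imp_derivable_single]] by blast
      then show ?thesis using snoc by simp
    next
      case (2 C)
      then have "subst_le \<Gamma> (\<Delta> @ [C])" using snoc.IH by simp
      then obtain \<Gamma>1 \<Gamma>2 where \<Gamma>: "\<Gamma> = \<Gamma>1 @ \<Gamma>2" "subst_le \<Gamma>1 \<Delta>" "derivable \<Gamma>2 C"
        by (rule subst_le_snocE)
      have "derivable [C, G] D" using 2 by (simp add: derivable_iff_tamari left_product_def)
      then have "derivable (\<Gamma>2 @ [G]) D" using derivable.cut[OF \<Gamma>(3), of "[]" "[G]" D] by simp
      then have "subst_le (\<Gamma>1 @ \<Gamma>2 @ [G]) (\<Delta> @ [D])" using s_app[OF \<Gamma>(2) s_der] by simp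
      then show ?thesis using \<Gamma> snoc by simp
    qed
  qed
qed

lemma subst_le_iff_tamari_comb: "subst_le \<Gamma> \<Delta> \<longleftrightarrow> tamari (comb a \<Gamma>) (comb a \<Delta>)"
  using subst_le_imp_tamari[of \<Gamma> \<Delta> "Atom a"] tamari_comb_imp_subst_le by auto

fun spine :: "'a frm \<Rightarrow> 'a frm list" where
  "spine (Atom b) = []"
| "spine (Prod L R) = spine L @ [R]"

lemma spine_comb [simp]: "spine (comb a \<Gamma>) = \<Gamma>"
proof -
  have "spine (foldl Prod X \<Gamma>) = spine X @ \<Gamma>" for X
    by (induction \<Gamma> arbitrary: X) auto
  then show ?thesis by simp
qed

lemma comb_spine: "comb (hd (fr X)) (spine X) = X"
  by (induction X) auto

section \<open>Lattices\<close>

lemma partial_order_eqI: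
  fixes L :: "('b, 'c) gorder_scheme"
  assumes eq: "eq L = (=)"
    and refl: "\<And>x. x \<in> carrier L \<Longrightarrow> x \<sqsubseteq>\<^bsub>L\<^esub> x"
    and antisym: "\<And>x y. x \<in> carrier L \<Longrightarrow> y \<in> carrier L \<Longrightarrow> x \<sqsubseteq>\<^bsub>L\<^esub> y \<Longrightarrow> y \<sqsubseteq>\<^bsub>L\<^esub> x \<Longrightarrow> x = y"
    and trans: "\<And>x y z. x \<in> carrier L \<Longrightarrow> y \<in> carrier L \<Longrightarrow> z \<in> carrier L \<Longrightarrow>
      x \<sqsubseteq>\<^bsub>L\<^esub> y \<Longrightarrow> y \<sqsubseteq>\<^bsub>L\<^esub> z \<Longrightarrow> x \<sqsubseteq>\<^bsub>L\<^esub> z"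
  shows "partial_order L"
  by (intro partial_order.intro weak_partial_order.intro equivalence.intro
      partial_order_axioms.intro weak_partial_order_axioms.intro) (auto simp: eq intro: refl antisym trans)

lemma lattice_of_glb_lub:
  fixes L :: "('b, 'c) gorder_scheme"
  assumes "partial_order L"
    and glb_closed: "\<And>x y. x \<in> carrier L \<Longrightarrow> y \<in> carrier L \<Longrightarrow> glb x y \<in> carrier L"
    and le_glb_iff: "\<And>x y z. x \<in> carrier L \<Longrightarrow> y \<in> carrier L \<Longrightarrow> z \<in> carrier L \<Longrightarrow>
      z \<sqsubseteq>\<^bsub>L\<^esub> glb x y \<longleftrightarrow> z \<sqsubseteq>\<^bsub>L\<^esub> x \<and> z \<sqsubseteq>\<^bsub>L\<^esub> y"
    and lub_closed: "\<And>x y. x \<in> carrier L \<Longrightarrow> y \<in> carrier L \<Longrightarrow> lub x y \<in> carrier L"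
    and lub_le_iff: "\<And>x y z. x \<in> carrier L \<Longrightarrow> y \<in> carrier L \<Longrightarrow> z \<in> carrier L \<Longrightarrow>
      lub x y \<sqsubseteq>\<^bsub>L\<^esub> z \<longleftrightarrow> x \<sqsubseteq>\<^bsub>L\<^esub> z \<and> y \<sqsubseteq>\<^bsub>L\<^esub> z"
  shows "lattice L"
proof -
  interpret partial_order L by fact
  show ?thesis
  proof unfold_locales
    fix x y assume xy: "x \<in> carrier L" "y \<in> carrier L"
    have "least L (lub x y) (Upper L {x, y})"
      using xy lub_closed lub_le_iff[of x y "lub x y"] lub_le_iff[of x y]
      by (auto simp: least_def Upper_def)
    then show "\<exists>s. least L s (Upper L {x, y})" ..
    have "greatest L (glb x y) (Lower L {x, y})"
      using xy glb_closed le_glb_iff[of x y "glb x y"] le_glb_iff[of x y]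
      by (auto simp: greatest_def Lower_def)
    then show "\<exists>s. greatest L s (Lower L {x, y})" ..
  qed
qed

lemma lattice_transfer:
  fixes L :: "('b, 'c) gorder_scheme" and K :: "('d, 'e) gorder_scheme"
  assumes "lattice K" and eq: "eq L = (=)"
    and bij: "bij_betw f (carrier L) (carrier K)"
    and le_iff: "\<And>x y. x \<in> carrier L \<Longrightarrow> y \<in> carrier L \<Longrightarrow> x \<sqsubseteq>\<^bsub>L\<^esub> y \<longleftrightarrow> f x \<sqsubseteq>\<^bsub>K\<^esub> f y"
  shows "lattice L"
proof -
  interpret K: lattice K by fact
  define g where "g = the_inv_into (carrier L) f"
  have f: "\<And>x. x \<in> carrier L \<Longrightarrow> f x \<in> carrier K"
    by (rule bij_betw_apply[OF bij])
  have g: "g u \<in> carrier L" "f (g u) = u" if "u \<in> carrier K" for u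
    unfolding g_def using that bij
    by (simp_all add: bij_betw_apply[OF bij_betw_the_inv_into[OF bij]] f_the_inv_into_f bij_betw_def)
  have "partial_order L"
  proof (rule partial_order_eqI[OF eq])
    fix x y z assume xyz: "x \<in> carrier L" "y \<in> carrier L" "z \<in> carrier L"
    then show "x \<sqsubseteq>\<^bsub>L\<^esub> x" using le_iff f by simp
    show "x = y" if "x \<sqsubseteq>\<^bsub>L\<^esub> y" "y \<sqsubseteq>\<^bsub>L\<^esub> x"
    proof -
      have "f x = f y" using that xyz le_iff f by (intro K.le_antisym) simp_all
      then show "x = y" using xyz bij_betw_imp_inj_on[OF bij] by (simp add: inj_on_eq_iff)
    qed
    show "x \<sqsubseteq>\<^bsub>L\<^esub> z" if "x \<sqsubseteq>\<^bsub>L\<^esub> y" "y \<sqsubseteq>\<^bsub>L\<^esub> z"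
      using that xyz le_iff f K.le_trans[of "f x" "f y" "f z"] by simp
  qed
  then show ?thesis
  proof (rule lattice_of_glb_lub[where glb = "\<lambda>x y. g (f x \<sqinter>\<^bsub>K\<^esub> f y)"
        and lub = "\<lambda>x y. g (f x \<squnion>\<^bsub>K\<^esub> f y)"])
    fix x y z assume xyz: "x \<in> carrier L" "y \<in> carrier L" "z \<in> carrier L"
    show "g (f x \<sqinter>\<^bsub>K\<^esub> f y) \<in> carrier L" "g (f x \<squnion>\<^bsub>K\<^esub> f y) \<in> carrier L"
      using xyz f g by simp_all
    have fxyz: "f x \<in> carrier K" "f y \<in> carrier K" "f z \<in> carrier K" using xyz f by auto
    have "z \<sqsubseteq>\<^bsub>L\<^esub> g (f x \<sqinter>\<^bsub>K\<^esub> f y) \<longleftrightarrow> f z \<sqsubseteq>\<^bsub>K\<^esub> f x \<sqinter>\<^bsub>K\<^esub> f y"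
      using le_iff[of z "g (f x \<sqinter>\<^bsub>K\<^esub> f y)"] xyz fxyz g by simp
    also have "\<dots> \<longleftrightarrow> f z \<sqsubseteq>\<^bsub>K\<^esub> f x \<and> f z \<sqsubseteq>\<^bsub>K\<^esub> f y"
      using K.le_trans[OF _ K.meet_left[OF fxyz(1,2)] fxyz(3) _ fxyz(1)]
        K.le_trans[OF _ K.meet_right[OF fxyz(1,2)] fxyz(3) _ fxyz(2)]
        K.meet_le[OF _ _ fxyz] K.meet_closed[OF fxyz(1,2)]
      by blast
    finally show "z \<sqsubseteq>\<^bsub>L\<^esub> g (f x \<sqinter>\<^bsub>K\<^esub> f y) \<longleftrightarrow> z \<sqsubseteq>\<^bsub>L\<^esub> x \<and> z \<sqsubseteq>\<^bsub>L\<^esub> y"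
      using le_iff xyz by simp
    have "g (f x \<squnion>\<^bsub>K\<^esub> f y) \<sqsubseteq>\<^bsub>L\<^esub> z \<longleftrightarrow> f x \<squnion>\<^bsub>K\<^esub> f y \<sqsubseteq>\<^bsub>K\<^esub> f z"
      using le_iff[of "g (f x \<squnion>\<^bsub>K\<^esub> f y)" z] xyz fxyz g by simp
    also have "\<dots> \<longleftrightarrow> f x \<sqsubseteq>\<^bsub>K\<^esub> f z \<and> f y \<sqsubseteq>\<^bsub>K\<^esub> f z"
      using K.le_trans[OF K.join_left[OF fxyz(1,2)] _ fxyz(1) _ fxyz(3)]
        K.le_trans[OF K.join_right[OF fxyz(1,2)] _ fxyz(2) _ fxyz(3)]
        K.join_le[OF _ _ fxyz] K.join_closed[OF fxyz(1,2)]
      by blast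
    finally show "g (f x \<squnion>\<^bsub>K\<^esub> f y) \<sqsubseteq>\<^bsub>L\<^esub> z \<longleftrightarrow> x \<sqsubseteq>\<^bsub>L\<^esub> z \<and> y \<sqsubseteq>\<^bsub>L\<^esub> z"
      using le_iff xyz by simp
  qed
qed

lemma partial_order_Frm: "partial_order (Frm \<Omega>)"
  by (rule partial_order_eqI) (auto simp: Frm_def intro: t_refl t_trans tamari_antisym)

lemma lattice_Frm: "lattice (Frm \<Omega>)"
  using partial_order_Frm
proof (rule lattice_of_glb_lub[where glb = tamari_meet and lub = tamari_join])
  fix A B X assume "A \<in> carrier (Frm \<Omega>)" "B \<in> carrier (Frm \<Omega>)" "X \<in> carrier (Frm \<Omega>)"
  then have "fr A = \<Omega>" "fr B = \<Omega>" by (simp_all add: Frm_def)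
  then show "tamari_meet A B \<in> carrier (Frm \<Omega>)" "tamari_join A B \<in> carrier (Frm \<Omega>)"
    and "X \<sqsubseteq>\<^bsub>Frm \<Omega>\<^esub> tamari_meet A B \<longleftrightarrow> X \<sqsubseteq>\<^bsub>Frm \<Omega>\<^esub> A \<and> X \<sqsubseteq>\<^bsub>Frm \<Omega>\<^esub> B"
    and "tamari_join A B \<sqsubseteq>\<^bsub>Frm \<Omega>\<^esub> X \<longleftrightarrow> A \<sqsubseteq>\<^bsub>Frm \<Omega>\<^esub> X \<and> B \<sqsubseteq>\<^bsub>Frm \<Omega>\<^esub> X"
    by (simp_all add: Frm_def fr_tamari_meet_and_reach fr_tamari_join tamari_meet_iff tamari_join_iff)
qed

lemma lattice_Ctx: "lattice (Ctx \<Omega>)"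
proof -
  fix a :: 'a
  have spine: "comb a (spine X) = X" "spine X \<in> carrier (Ctx \<Omega>)"
    if "X \<in> carrier (Frm (a # \<Omega>))" for X
  proof -
    have "fr X = a # \<Omega>" using that by (simp add: Frm_def)
    then show "comb a (spine X) = X" using comb_spine[of X] by simp
    then have "a # frc (spine X) = a # \<Omega>"
      using \<open>fr X = a # \<Omega>\<close> fr_foldl_Prod[of "Atom a" "spine X"] by simp
    then show "spine X \<in> carrier (Ctx \<Omega>)" by (simp add: Ctx_def)
  qed
  have "bij_betw (comb a) (carrier (Ctx \<Omega>)) (carrier (Frm (a # \<Omega>)))"
    by (rule bij_betw_byWitness[where f' = spine])
      (use spine in \<open>auto simp: Ctx_def Frm_def fr_foldl_Prod\<close>)
  then show ?thesis
    by (rule lattice_transfer[OF lattice_Frm, rotated])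
      (simp_all add: Ctx_def Frm_def subst_le_iff_tamari_comb)
qed

theorem theorem2p17:
  fixes \<Omega> :: "'a list"
  assumes "\<Omega> \<noteq> []"
  shows "lattice (Frm \<Omega>) \<and> lattice (Ctx \<Omega>)"
  using lattice_Frm lattice_Ctx by blast

end
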